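(* Let $s\in(0,\infty)$, $r\in\mathbb N$ with $r>s$, $f\in\Lambda_s$, and $\varepsilon,\varepsilon_1\in(0,\infty)$ with $\varepsilon>\varepsilon_1$. Then there exists $\delta\in(0,\infty)$, depending only on $f$, $\varepsilon$, $\varepsilon_1$ (and $s,r,n$), such that for every $j\in\mathbb N$, $$\big[S_{r,j}(s,f,\varepsilon)\big]_\delta\subset S_{r,j-1}(s,f,\varepsilon_1)\cup S_{r,j}(s,f,\varepsilon_1)\cup S_{r,j+1}(s,f,\varepsilon_1).$$
   Context: $\Delta_hf(x):=f(x+h/2)-f(x-h/2)$, $\Delta^{k+1}_h:=\Delta^k_h\Delta_h$, $\Delta_kf(x,y):=\sup_{h\in\mathbb R^n,|h|=y}|\Delta_h^kf(x)|$. $\Lambda_s$: bounded continuous $f$ on $\mathbb R^n$ with $\|f\|_{L^\infty}+\sup_{x\in\mathbb R^n,y\in(0,1]}\Delta_{\lfloor s\rfloor+1}f(x,y)/y^s<\infty$. $S_{r,j}(s,f,\varepsilon):=\{(x,y)\in\mathbb R^n\times(0,\infty):\Delta_rf(x,y)/y^s>\varepsilon,\ y\in(2^{-j-1},2^{-j}]\}$. Hyperbolic metric on $\mathbb R^{n+1}_+=\mathbb R^n\times(0,\infty)$: $\rho(\mathbf x,\mathbf y)=\operatorname{arccosh}(1+\frac{|\mathbf x-\mathbf y|^2}{2x_{n+1}y_{n+1}})$; for $A\subset\mathbb R^{n+1}_+$ and $R>0$, $A_R:=\{\mathbf x\in\mathbb R^{n+1}_+:\inf_{\mathbf y\in A}\rho(\mathbf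 x,\mathbf y)<R\}$. *)

theory Defs
  imports "HOL-Analysis.Analysis"
begin

definition fdiff :: "'a::real_normed_vector \<Rightarrow> ('a \<Rightarrow> real) \<Rightarrow> 'a \<Rightarrow> real" where
  "fdiff h f x = f (x + (1/2) *\<^sub>R h) - f (x - (1/2) *\<^sub>R h)"

fun fdiff_pow :: "nat \<Rightarrow> 'a::real_normed_vector \<Rightarrow> ('a \<Rightarrow> real) \<Rightarrow> 'a \<Rightarrow> real" where
  "fdiff_pow 0 h f = f"
| "fdiff_pow (Suc k) h f = fdiff_pow k h (fdiff h f)"

definition Delta_sup :: "nat \<Rightarrow> ('a::real_normed_vector \<Rightarrow> real) \<Rightarrow> 'a \<Rightarrow> real \<Rightarrow> real" where
  "Delta_sup k f x y = Sup {\<bar>fdiff_pow k h f x\<bar> | h. norm h = y}"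

definition Lambda :: "real \<Rightarrow> ('a::real_normed_vector \<Rightarrow> real) set" where
  "Lambda s = {f. continuous_on UNIV f \<and> bounded (range f) \<and>
     (\<exists>C. \<forall>x y. 0 < y \<and> y \<le> 1 \<longrightarrow>
        Delta_sup (nat \<lfloor>s\<rfloor> + 1) f x y / y powr s \<le> C)}"

definition S_set :: "nat \<Rightarrow> int \<Rightarrow> real \<Rightarrow> ('a::real_normed_vector \<Rightarrow> real) \<Rightarrow> real \<Rightarrow> ('a \<times> real) set" where
  "S_set r j s f \<epsilon> = {(x, y). 0 < y \<and> Delta_sup r f x y / y powr s > \<epsilon> \<and>
       2 powr (- real_of_int j - 1) < y \<and> y \<le> 2 powr (- real_of_int j)}"

definition hyp_dist :: "('a::real_normed_vector \<times> real) \<Rightarrow> ('a \<times> real) \<Rightarrow> real" where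
  "hyp_dist p q = arcosh (1 + ((norm (fst p - fst q))\<^sup>2 + (snd p - snd q)\<^sup>2) / (2 * snd p * snd q))"

definition hyp_nbhd :: "('a::real_normed_vector \<times> real) set \<Rightarrow> real \<Rightarrow> ('a \<times> real) set" where
  "hyp_nbhd A R = {p. 0 < snd p \<and> (\<exists>q\<in>A. hyp_dist p q < R)}"

end

theory Submission
  imports Defs
begin

text \<open>Since \<open>f\<close> is bounded and its differences of order \<open>\<lfloor>s\<rfloor> + 1\<close> are \<open>O(|h|^s)\<close> for
  \<open>|h| \<le> 1\<close>, every difference of order \<open>r > s\<close> satisfies \<open>|\<Delta>^r_v f(x)| \<le> K |v|^s\<close>.
  Descending from order \<open>r\<close> to order \<open>1\<close> with Marchaud's doubling argument (halving the step of a
  \<open>j\<close>-th difference only costs a \<open>(j+1)\<close>-th difference) one finds that, relative to \<open>|h|^s\<close>,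
  \<open>\<Delta>^r_h f(x)\<close> hardly changes when \<open>x\<close> moves by a small multiple of \<open>|h|\<close> or \<open>h\<close> is dilated by a
  factor close to \<open>1\<close>. A point at small hyperbolic distance from \<open>(x0, y0)\<close> is such a
  perturbation with \<open>|h| = y0\<close>, so \<open>\<Delta>_r f(x0, y0) / y0^s > \<epsilon>\<close> forces \<open>\<Delta>_r f(x, y) / y^s > \<epsilon>1\<close>;
  and \<open>y\<close> lies within a factor \<open>3/2\<close> of \<open>y0\<close>, hence in one of the three adjacent dyadic bands.\<close>

section \<open>Differences as finite sums\<close>

fun fdiff_coeffs :: "nat \<Rightarrow> (real \<times> real) list" where
  "fdiff_coeffs 0 = [(1, 0)]"
| "fdiff_coeffs (Suc k) =
     concat (map (\<lambda>(c, d). [(c, d + 1/2), (- c, d - 1/2)]) (fdiff_coeffs k))"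

lemma sum_list_concat_map:
  "sum_list (map F (concat (map G xs))) = (\<Sum>a\<leftarrow>xs. sum_list (map F (G a)))"
  by (induction xs) auto

lemma sum_list_map_swap:
  fixes F :: "'x \<Rightarrow> 'y \<Rightarrow> 'b::comm_monoid_add"
  shows "(\<Sum>p\<leftarrow>xs. \<Sum>q\<leftarrow>ys. F p q) = (\<Sum>q\<leftarrow>ys. \<Sum>p\<leftarrow>xs. F p q)"
  by (induction xs) (simp_all add: sum_list_addf)

lemma fdiff_pow_eq_sum:
  "fdiff_pow k h f x = (\<Sum>p\<leftarrow>fdiff_coeffs k. fst p * f (x + snd p *\<^sub>R h))"
proof (induction k arbitrary: f x)
  case 0
  then show ?case by simp
next
  case (Suc k)
  have "fdiff_pow (Suc k) h f x = (\<Sum>p\<leftarrow>fdiff_coeffs k. fst p * fdiff h f (x + snd p *\<^sub>R h))"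
    using Suc by simp
  also have "\<dots> = (\<Sum>p\<leftarrow>fdiff_coeffs (Suc k). fst p * f (x + snd p *\<^sub>R h))"
    unfolding fdiff_coeffs.simps sum_list_concat_map
    by (rule arg_cong[where f = sum_list], rule map_cong)
       (auto simp: fdiff_def algebra_simps scaleR_left_distrib)
  finally show ?case .
qed

lemma abs_snd_fdiff_coeffs_le: "p \<in> set (fdiff_coeffs k) \<Longrightarrow> \<bar>snd p\<bar> \<le> real k / 2"
proof (induction k arbitrary: p)
  case 0
  then show ?case by simp
next
  case (Suc k)
  then obtain q where q: "q \<in> set (fdiff_coeffs k)" "snd p = snd q + 1/2 \<or> snd p = snd q - 1/2"
    by (auto split: prod.splits)
  have "\<bar>snd q\<bar> \<le> real k / 2"
    using Suc.IH[OF q(1)] .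
  then show ?case
    using q(2) by (simp add: abs_le_iff) linarith
qed

lemma sum_list_abs_fst_fdiff_coeffs: "(\<Sum>p\<leftarrow>fdiff_coeffs k. \<bar>fst p\<bar>) = 2 ^ k"
proof (induction k)
  case 0
  then show ?case by simp
next
  case (Suc k)
  have "(\<Sum>p\<leftarrow>fdiff_coeffs (Suc k). \<bar>fst p\<bar>) = (\<Sum>p\<leftarrow>fdiff_coeffs k. \<bar>fst p\<bar> + \<bar>fst p\<bar>)"
    unfolding fdiff_coeffs.simps sum_list_concat_map
    by (rule arg_cong[where f = sum_list], rule map_cong) auto
  then show ?case
    using Suc by (simp add: sum_list_const_mult)
qed

lemma abs_sum_list_mult_le:
  fixes xs :: "(real \<times> 'x) list"
  assumes "\<And>p. p \<in> set xs \<Longrightarrow> \<bar>F (snd p)\<bar> \<le> B"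
  shows "\<bar>\<Sum>p\<leftarrow>xs. fst p * F (snd p)\<bar> \<le> (\<Sum>p\<leftarrow>xs. \<bar>fst p\<bar>) * B"
proof -
  have "\<bar>\<Sum>p\<leftarrow>xs. fst p * F (snd p)\<bar> \<le> (\<Sum>p\<leftarrow>xs. \<bar>fst p * F (snd p)\<bar>)"
    using sum_list_abs[of "map (\<lambda>p. fst p * F (snd p)) xs"] by (simp add: comp_def)
  also have "\<dots> \<le> (\<Sum>p\<leftarrow>xs. \<bar>fst p\<bar> * B)"
    by (rule sum_list_mono) (use assms in \<open>auto simp: abs_mult intro: mult_left_mono\<close>)
  finally show ?thesis
    by (simp add: sum_list_mult_const)
qed

lemma fdiff_pow_abs_le_local:
  assumes "\<And>t. \<bar>t\<bar> \<le> real k / 2 \<Longrightarrow> \<bar>g (x + t *\<^sub>R h)\<bar> \<le> B"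
  shows "\<bar>fdiff_pow k h g x\<bar> \<le> 2 ^ k * B"
  using abs_sum_list_mult_le[of "fdiff_coeffs k" "\<lambda>d. g (x + d *\<^sub>R h)" B]
    assms abs_snd_fdiff_coeffs_le
  by (simp add: fdiff_pow_eq_sum sum_list_abs_fst_fdiff_coeffs)

lemma fdiff_pow_abs_le:
  assumes "\<And>y. \<bar>g y\<bar> \<le> B"
  shows "\<bar>fdiff_pow k h g x\<bar> \<le> 2 ^ k * B"
  using fdiff_pow_abs_le_local assms by blast

lemma fdiff_pow_add: "fdiff_pow (a + b) h f = fdiff_pow b h (fdiff_pow a h f)"
  by (induction a arbitrary: f) auto

lemma fdiff_pow_Suc': "fdiff_pow (Suc k) h f = fdiff h (fdiff_pow k h f)"
  using fdiff_pow_add[of k 1 h f] by simp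

lemma fdiff_pow_Suc_zero: "fdiff_pow (Suc k) 0 f x = 0"
  by (simp add: fdiff_pow_eq_sum fdiff_def)

lemma fdiff_pow_commute:
  "fdiff_pow a v (fdiff_pow b h f) x = fdiff_pow b h (fdiff_pow a v f) x"
proof -
  have "fdiff_pow a v (fdiff_pow b h f) x =
     (\<Sum>p\<leftarrow>fdiff_coeffs a. \<Sum>q\<leftarrow>fdiff_coeffs b.
        fst p * fst q * f (x + snd p *\<^sub>R v + snd q *\<^sub>R h))"
    by (simp add: fdiff_pow_eq_sum sum_list_const_mult[symmetric] mult.assoc)
  also have "\<dots> = (\<Sum>q\<leftarrow>fdiff_coeffs b. \<Sum>p\<leftarrow>fdiff_coeffs a.
        fst p * fst q * f (x + snd p *\<^sub>R v + snd q *\<^sub>R h))"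
    by (rule sum_list_map_swap)
  also have "\<dots> = fdiff_pow b h (fdiff_pow a v f) x"
    by (simp add: fdiff_pow_eq_sum sum_list_const_mult[symmetric] algebra_simps)
  finally show ?thesis .
qed

lemma fdiff_pow_add_fun:
  "fdiff_pow k h (\<lambda>y. F y + G y) x = fdiff_pow k h F x + fdiff_pow k h G x"
  by (simp add: fdiff_pow_eq_sum distrib_left sum_list_addf)

lemma fdiff_pow_const_mult:
  "fdiff_pow k h (\<lambda>y. c * F y) x = c * fdiff_pow k h F x"
  by (simp add: fdiff_pow_eq_sum sum_list_const_mult[symmetric] mult.left_commute)

lemma fdiff_pow_sum_list:
  "fdiff_pow k h (\<lambda>y. \<Sum>p\<leftarrow>xs. F p y) x = (\<Sum>p\<leftarrow>xs. fdiff_pow k h (F p) x)"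
  by (simp add: fdiff_pow_eq_sum sum_list_const_mult[symmetric] sum_list_map_swap[of _ xs])

lemma fdiff_pow_compose_affine:
  assumes "linear L"
  shows "fdiff_pow k w (\<lambda>z. F (a + L z)) y = fdiff_pow k (L w) F (a + L y)"
  by (simp add: fdiff_pow_eq_sum linear_add[OF assms] linear_scale[OF assms] add.assoc)

lemma fdiff_pow_shift: "fdiff_pow k h (\<lambda>y. F (y + a)) x = fdiff_pow k h F (x + a)"
  using fdiff_pow_compose_affine[OF linear_id, of k h F a x] by (simp add: add.commute)

lemma fdiff_pow_shift_minus: "fdiff_pow k h (\<lambda>y. F (y - a)) x = fdiff_pow k h F (x - a)"
  using fdiff_pow_shift[of k h F "- a" x] by simp

section \<open>Marchaud's doubling argument\<close>

lemma fdiff_pow_Suc_eq_midpoints: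
  "fdiff_pow (Suc k) v g z = fdiff_pow k v g (z + (1/2) *\<^sub>R v) - fdiff_pow k v g (z - (1/2) *\<^sub>R v)"
  by (simp only: fdiff_pow_Suc') (simp add: fdiff_def)

lemma fdiff_double_step:
  "fdiff (2 *\<^sub>R v) g y = fdiff v g (y + (1/2) *\<^sub>R v) + fdiff v g (y - (1/2) *\<^sub>R v)"
  by (auto simp: fdiff_def algebra_simps simp flip: scaleR_add_left)

lemma fdiff_pow_double_step:
  fixes g :: "'b::real_normed_vector \<Rightarrow> real"
  assumes "0 \<le> E"
    and "\<And>y. dist y x \<le> real k * norm v \<Longrightarrow> \<bar>fdiff_pow (Suc k) v g y\<bar> \<le> E"
  shows "\<bar>fdiff_pow k (2 *\<^sub>R v) g x - 2 ^ k * fdiff_pow k v g (x - (real k / 2) *\<^sub>R v)\<bar>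
           \<le> real k * 2 ^ k * E / 2"
  using assms
proof (induction k arbitrary: g x E)
  case 0
  then show ?case by simp
next
  case (Suc k)
  define g' where "g' y = fdiff v g (y + (1/2) *\<^sub>R v) + fdiff v g (y - (1/2) *\<^sub>R v)" for y
  have "fdiff (2 *\<^sub>R v) g = g'"
    by (auto simp: g'_def fdiff_double_step)
  then have double: "fdiff_pow (Suc k) (2 *\<^sub>R v) g = fdiff_pow k (2 *\<^sub>R v) g'"
    by simp
  have g'_diff: "fdiff_pow j v g' y =
      fdiff_pow (Suc j) v g (y + (1/2) *\<^sub>R v) + fdiff_pow (Suc j) v g (y - (1/2) *\<^sub>R v)" for j y
    by (simp add: g'_def[abs_def] fdiff_pow_add_fun fdiff_pow_shift fdiff_pow_shift_minus)
  have "\<bar>fdiff_pow (Suc k) v g' y\<bar> \<le> 2 * E" if "dist y x \<le> real k * norm v" for y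
  proof -
    have "dist (y + (1/2) *\<^sub>R v) x \<le> real (Suc k) * norm v"
         "dist (y - (1/2) *\<^sub>R v) x \<le> real (Suc k) * norm v"
      using dist_triangle[of "y + (1/2) *\<^sub>R v" x y] dist_triangle[of "y - (1/2) *\<^sub>R v" x y]
        \<open>dist y x \<le> real k * norm v\<close>
      by (simp_all add: dist_norm algebra_simps) (use norm_ge_zero[of v] in linarith)+
    then show ?thesis
      unfolding g'_diff using Suc.prems(2) by (smt (verit))
  qed
  then have IH: "\<bar>fdiff_pow k (2 *\<^sub>R v) g' x - 2 ^ k * fdiff_pow k v g' (x - (real k / 2) *\<^sub>R v)\<bar>
           \<le> real k * 2 ^ k * E"
    using Suc.IH[of "2 * E" x g'] Suc.prems(1) by simp
  define z where "z = x - (real k / 2) *\<^sub>R v"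
  have z_left: "z - (1/2) *\<^sub>R v = x - (real (Suc k) / 2) *\<^sub>R v"
    by (simp add: z_def algebra_simps add_divide_distrib flip: scaleR_add_left)
  from fdiff_pow_Suc_eq_midpoints[of "Suc k" v g z]
  have g'_z: "fdiff_pow k v g' z =
      2 * fdiff_pow (Suc k) v g (x - (real (Suc k) / 2) *\<^sub>R v) + fdiff_pow (Suc (Suc k)) v g z"
    by (simp add: g'_diff z_left)
  have "dist z x \<le> real (Suc k) * norm v"
    using mult_right_mono[of "real k / 2" "real (Suc k)" "norm v"] by (simp add: z_def dist_norm)
  then have "\<bar>2 ^ k * fdiff_pow (Suc (Suc k)) v g z\<bar> \<le> 2 ^ k * E"
    using Suc.prems(2) by (simp add: abs_mult del: fdiff_pow.simps)
  moreover have "fdiff_pow (Suc k) (2 *\<^sub>R v) g x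
      - 2 ^ Suc k * fdiff_pow (Suc k) v g (x - (real (Suc k) / 2) *\<^sub>R v)
    = (fdiff_pow k (2 *\<^sub>R v) g' x - 2 ^ k * fdiff_pow k v g' z)
      + 2 ^ k * fdiff_pow (Suc (Suc k)) v g z"
    by (simp only: double g'_z) (simp add: algebra_simps)
  ultimately have "\<bar>fdiff_pow (Suc k) (2 *\<^sub>R v) g x
      - 2 ^ Suc k * fdiff_pow (Suc k) v g (x - (real (Suc k) / 2) *\<^sub>R v)\<bar>
    \<le> real k * 2 ^ k * E + 2 ^ k * E"
    using IH abs_triangle_ineq unfolding z_def by (smt (verit))
  also have "\<dots> = real (Suc k) * 2 ^ Suc k * E / 2"
    by (simp add: algebra_simps)
  finally show ?case .
qed

lemma fdiff_pow_dyadic_bound: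
  fixes g :: "'b::real_normed_vector \<Rightarrow> real"
  assumes j: "1 \<le> j" and E: "0 \<le> E"
    and hE: "\<And>w y. norm w \<le> \<sigma> \<Longrightarrow> dist y a \<le> R \<Longrightarrow> \<bar>fdiff_pow (Suc j) w g y\<bar> \<le> E"
    and hB: "\<And>w y. norm w \<le> \<sigma> \<Longrightarrow> dist y a \<le> R \<Longrightarrow> \<bar>fdiff_pow j w g y\<bar> \<le> B"
  shows "2 ^ N * norm v \<le> \<sigma> \<Longrightarrow> dist x a + 2 * real j * (2 ^ N - 1) * norm v \<le> R \<Longrightarrow>
         \<bar>fdiff_pow j v g x\<bar> \<le> B / 2 ^ (j * N) + real j * E"
proof (induction N arbitrary: v x)
  case 0
  have "0 \<le> real j * E"
    using E by simp
  then show ?case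
    using 0 hB[of v x] by simp
next
  case (Suc N)
  have pow_ge: "1 \<le> (2::real) ^ N"
    by simp
  have v: "norm v \<le> \<sigma>"
    using Suc.prems(1) mult_right_mono[of 1 "2 ^ Suc N" "norm v"] pow_ge by simp
  have "(3/2::real) \<le> 2 * (2 ^ Suc N - 1)"
    using pow_ge by (simp only: power_Suc right_diff_distrib)
  from mult_right_mono[OF this, of "real j * norm v"]
  have reach: "3/2 * (real j * norm v) \<le> 2 * real j * (2 ^ Suc N - 1) * norm v"
    by (simp add: mult_ac)
  define z where "z = x + (real j / 2) *\<^sub>R v"
  have dist_z: "dist z x = real j * norm v / 2"
    by (simp add: z_def dist_norm)
  have "\<bar>fdiff_pow (Suc j) v g y\<bar> \<le> E" if "dist y z \<le> real j * norm v" for y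
  proof (rule hE[OF v])
    show "dist y a \<le> R"
      using dist_triangle[of y a z] dist_triangle[of z a x] that dist_z reach Suc.prems(2)
      by linarith
  qed
  then have double: "\<bar>fdiff_pow j (2 *\<^sub>R v) g z - 2 ^ j * fdiff_pow j v g x\<bar> \<le> real j * 2 ^ j * E / 2"
    using fdiff_pow_double_step[OF E, of z j v g] by (simp add: z_def)
  have "\<bar>fdiff_pow j (2 *\<^sub>R v) g z\<bar> \<le> B / 2 ^ (j * N) + real j * E"
  proof (rule Suc.IH)
    show "2 ^ N * norm (2 *\<^sub>R v) \<le> \<sigma>"
      using Suc.prems(1) by simp
    have "2 * real j * (2 ^ N - 1) * norm (2 *\<^sub>R v)
        = 2 * real j * (2 ^ Suc N - 1) * norm v - 2 * (real j * norm v)"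
      by (simp add: algebra_simps)
    moreover have "0 \<le> real j * norm v"
      by simp
    ultimately show "dist z a + 2 * real j * (2 ^ N - 1) * norm (2 *\<^sub>R v) \<le> R"
      using dist_triangle[of z a x] dist_z Suc.prems(2) by linarith
  qed
  moreover have "2 ^ j * \<bar>fdiff_pow j v g x\<bar> \<le> \<bar>fdiff_pow j (2 *\<^sub>R v) g z\<bar>
      + \<bar>fdiff_pow j (2 *\<^sub>R v) g z - 2 ^ j * fdiff_pow j v g x\<bar>"
    using abs_triangle_ineq4[of "fdiff_pow j (2 *\<^sub>R v) g z"
        "fdiff_pow j (2 *\<^sub>R v) g z - 2 ^ j * fdiff_pow j v g x"]
    by (simp add: abs_mult)
  ultimately have "2 ^ j * \<bar>fdiff_pow j v g x\<bar> \<le> B / 2 ^ (j * N) + real j * E + real j * 2 ^ j * E / 2"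
    using double by linarith
  then have "\<bar>fdiff_pow j v g x\<bar> \<le> B / 2 ^ (j * Suc N) + real j * E / 2 ^ j + real j * E / 2"
    by (simp add: field_simps power_add mult_ac)
  moreover have "real j * E / 2 ^ j \<le> real j * E / 2"
    using j E by (intro divide_left_mono) (simp_all add: self_le_power)
  ultimately show ?case
    by linarith
qed

lemma ex_mult_powr_le:
  fixes A \<eta> s :: real
  assumes "0 < \<eta>" "0 \<le> A" "0 < s"
  obtains \<rho> where "0 < \<rho>" "A * \<rho> powr s \<le> \<eta>"
proof
  let ?\<rho> = "(\<eta> / (A + 1)) powr (1 / s)"
  show "0 < ?\<rho>"
    using assms by simp
  have "?\<rho> powr s = \<eta> / (A + 1)"
    using assms by (simp add: powr_powr)
  moreover have "A * (\<eta> / (A + 1)) \<le> \<eta>"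
    using assms by (simp add: field_simps)
  ultimately show "A * ?\<rho> powr s \<le> \<eta>"
    by simp
qed

lemma ex_divide_pow2_le:
  fixes C \<eta> :: real
  assumes "0 < \<eta>" "1 \<le> j"
  obtains N where "C / 2 ^ (j * N) \<le> \<eta>"
proof -
  obtain N where N: "C / \<eta> < 2 ^ N"
    using real_arch_pow[of 2 "C / \<eta>"] by auto
  have "\<eta> * 2 ^ N \<le> \<eta> * 2 ^ (j * N)"
    using assms by (intro mult_left_mono power_increasing) simp_all
  moreover have "C < \<eta> * 2 ^ N"
    using N assms(1) by (simp add: divide_less_eq mult.commute)
  ultimately have "C \<le> \<eta> * 2 ^ (j * N)"
    by linarith
  then show thesis
    using that[of N] by (simp add: divide_le_eq mult.commute)
qed

text \<open>The parameter \<open>c\<close> is the scale of all bounds; in the applications \<open>c = |h|^s\<close>.\<close>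
definition fdiff_regular ::
    "nat \<Rightarrow> real \<Rightarrow> real \<Rightarrow> real \<Rightarrow> ('b::real_normed_vector \<Rightarrow> real) \<Rightarrow> 'b \<Rightarrow> real \<Rightarrow> bool" where
  "fdiff_regular r s A B g a c \<longleftrightarrow> 0 \<le> c \<and>
     (\<forall>k w y. 1 \<le> k \<longrightarrow> k \<le> r \<longrightarrow> norm w \<le> 1 \<longrightarrow> dist y a \<le> real r \<longrightarrow>
        \<bar>fdiff_pow k w g y\<bar> \<le> B * c) \<and>
     (\<forall>w y. norm w \<le> 1 \<longrightarrow> dist y a \<le> real r \<longrightarrow>
        \<bar>fdiff_pow r w g y\<bar> \<le> A * c * norm w powr s)"

lemma fdiff_regular_dyadic_bound:
  fixes g :: "'b::real_normed_vector \<Rightarrow> real"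
  assumes reg: "fdiff_regular r s A B g a c" and j: "1 \<le> j" "Suc j \<le> r" and E: "0 \<le> E"
    and \<sigma>: "\<sigma> \<le> 1" "2 * real j * \<sigma> \<le> 1"
    and small: "\<And>w y. norm w \<le> \<sigma> \<Longrightarrow> dist y a \<le> real (Suc j) \<Longrightarrow>
      \<bar>fdiff_pow (Suc j) w g y\<bar> \<le> E"
    and v: "2 ^ N * norm v \<le> \<sigma>" and x: "dist x a \<le> real j"
  shows "\<bar>fdiff_pow j v g x\<bar> \<le> B * c / 2 ^ (j * N) + real j * E"
proof (rule fdiff_pow_dyadic_bound[where \<sigma> = \<sigma> and R = "real (Suc j)" and a = a])
  show "\<bar>fdiff_pow j w g y\<bar> \<le> B * c" if "norm w \<le> \<sigma>" "dist y a \<le> real (Suc j)" for w y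
    using reg that \<sigma>(1) j by (auto simp: fdiff_regular_def)
  have "(2 ^ N - 1) * norm v \<le> \<sigma>"
    using v norm_ge_zero[of v] unfolding left_diff_distrib by linarith
  from mult_left_mono[OF this, of "2 * real j"]
  have "2 * real j * (2 ^ N - 1) * norm v \<le> 2 * real j * \<sigma>"
    by (simp add: mult.assoc)
  then show "dist x a + 2 * real j * (2 ^ N - 1) * norm v \<le> real (Suc j)"
    using x \<sigma>(2) by simp
qed (use j E small v in simp_all)

lemma fdiff_regular_top_order_small:
  fixes s A B \<eta> :: real
  assumes s: "0 < s" and A: "0 \<le> A" and \<eta>: "0 < \<eta>"
  shows "\<exists>\<rho>>0. \<forall>(g::'b::real_normed_vector \<Rightarrow> real) a c v x.
           fdiff_regular r s A B g a c \<and> norm v \<le> \<rho> \<and> dist x a \<le> real r \<longrightarrow>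
           \<bar>fdiff_pow r v g x\<bar> \<le> \<eta> * c"
proof -
  obtain \<rho> where \<rho>: "0 < \<rho>" "A * \<rho> powr s \<le> \<eta>"
    using ex_mult_powr_le[OF \<eta> A s] .
  show ?thesis
  proof (intro exI[of _ "min \<rho> 1"] conjI allI impI)
    fix g :: "'b \<Rightarrow> real" and a v x :: 'b and c :: real
    assume H: "fdiff_regular r s A B g a c \<and> norm v \<le> min \<rho> 1 \<and> dist x a \<le> real r"
    then have c: "0 \<le> c"
      by (simp add: fdiff_regular_def)
    have "\<bar>fdiff_pow r v g x\<bar> \<le> A * c * norm v powr s"
      using H by (simp add: fdiff_regular_def)
    also have "\<dots> \<le> A * c * \<rho> powr s"
      using H A c s by (intro mult_left_mono powr_mono2) simp_all
    also have "\<dots> \<le> \<eta> * c"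
      using mult_right_mono[OF \<rho>(2) c] by (simp add: mult_ac)
    finally show "\<bar>fdiff_pow r v g x\<bar> \<le> \<eta> * c" .
  qed (use \<rho> in simp)
qed

text \<open>Downward induction on \<open>j\<close>: at \<open>j = r\<close> smallness is the assumed bound on differences of
  order \<open>r\<close>, and each lower order follows from the next one by the dyadic bound.\<close>
lemma fdiff_regular_small_difference:
  fixes s A B \<eta> :: real
  assumes s: "0 < s" and A: "0 \<le> A" and j: "1 \<le> j" "j \<le> r" and \<eta>: "0 < \<eta>"
  obtains \<rho> where "0 < \<rho>"
    "\<And>(g::'b::real_normed_vector \<Rightarrow> real) a c v x. fdiff_regular r s A B g a c \<Longrightarrow>
       norm v \<le> \<rho> \<Longrightarrow> dist x a \<le> real j \<Longrightarrow> \<bar>fdiff_pow j v g x\<bar> \<le> \<eta> * c"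
proof -
  from j \<eta> have "\<exists>\<rho>>0. \<forall>(g::'b \<Rightarrow> real) a c v x.
      fdiff_regular r s A B g a c \<and> norm v \<le> \<rho> \<and> dist x a \<le> real j \<longrightarrow>
      \<bar>fdiff_pow j v g x\<bar> \<le> \<eta> * c"
  proof (induction "r - j" arbitrary: j \<eta>)
    case 0
    then have "j = r"
      by simp
    then show ?case
      using fdiff_regular_top_order_small[OF s A \<open>0 < \<eta>\<close>] by simp
  next
    case (Suc d)
    have "r - Suc j = d" "Suc j \<le> r" "0 < \<eta> / (2 * real j)"
      using Suc.hyps(2) Suc.prems by auto
    then obtain \<rho>' where \<rho>': "0 < \<rho>'"
      "\<And>(g::'b \<Rightarrow> real) a c v x. fdiff_regular r s A B g a c \<Longrightarrow> norm v \<le> \<rho>' \<Longrightarrow>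
         dist x a \<le> real (Suc j) \<Longrightarrow> \<bar>fdiff_pow (Suc j) v g x\<bar> \<le> \<eta> / (2 * real j) * c"
      using Suc.hyps(1)[of "Suc j" "\<eta> / (2 * real j)"] by auto
    obtain N where N: "B / 2 ^ (j * N) \<le> \<eta> / 2"
      using ex_divide_pow2_le[of "\<eta> / 2" j B] Suc.prems by auto
    define \<sigma> where "\<sigma> = min \<rho>' (1 / (2 * real j))"
    have \<sigma>: "0 < \<sigma>" "\<sigma> \<le> \<rho>'" "\<sigma> \<le> 1 / (2 * real j)"
      using \<rho>'(1) Suc.prems(1) by (auto simp: \<sigma>_def)
    have "1 / (2 * real j) \<le> 1"
      using Suc.prems(1) by simp
    then have \<sigma>_le: "\<sigma> \<le> 1" "2 * real j * \<sigma> \<le> 1"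
      using \<sigma>(3) Suc.prems(1) by (linarith, simp add: field_simps)
    show ?case
    proof (intro exI[of _ "\<sigma> / 2 ^ N"] conjI allI impI)
      fix g :: "'b \<Rightarrow> real" and a v x :: 'b and c :: real
      assume H: "fdiff_regular r s A B g a c \<and> norm v \<le> \<sigma> / 2 ^ N \<and> dist x a \<le> real j"
      then have reg: "fdiff_regular r s A B g a c" and c: "0 \<le> c"
        by (simp_all add: fdiff_regular_def)
      have "2 ^ N * norm v \<le> \<sigma>"
        using H by (simp add: field_simps)
      have "\<bar>fdiff_pow j v g x\<bar> \<le> B * c / 2 ^ (j * N) + real j * (\<eta> / (2 * real j) * c)"
      proof (rule fdiff_regular_dyadic_bound[OF reg Suc.prems(1) \<open>Suc j \<le> r\<close> _ \<sigma>_le])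
        show "\<bar>fdiff_pow (Suc j) w g y\<bar> \<le> \<eta> / (2 * real j) * c"
          if "norm w \<le> \<sigma>" "dist y a \<le> real (Suc j)" for w y
          using \<rho>'(2)[OF reg _ that(2)] that(1) \<sigma>(2) by simp
      qed (use \<open>2 ^ N * norm v \<le> \<sigma>\<close> H c Suc.prems(3) in simp_all)
      also have "\<dots> = B / 2 ^ (j * N) * c + \<eta> / 2 * c"
        using Suc.prems(1) by simp
      also have "\<dots> \<le> \<eta> / 2 * c + \<eta> / 2 * c"
        using mult_right_mono[OF N c] by (rule add_right_mono)
      finally show "\<bar>fdiff_pow j v g x\<bar> \<le> \<eta> * c"
        by simp
    qed (use \<sigma> in simp)
  qed
  then show thesis
    using that by blast
qed

section \<open>Moving the base point and dilating the step\<close>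

text \<open>Rescaling by \<open>|h|\<close> turns translations by multiples of \<open>|h|\<close> into steps of norm at most \<open>1\<close>.\<close>
lemma fdiff_regular_translation:
  fixes f :: "'a::real_normed_vector \<Rightarrow> real"
  assumes K: "0 \<le> K" and hK: "\<And>v x. \<bar>fdiff_pow r v f x\<bar> \<le> K * norm v powr s"
  shows "fdiff_regular r s (2 ^ r * K) (2 ^ r * K)
           (\<lambda>z. fdiff_pow r h f (x + norm h *\<^sub>R z)) a (norm h powr s)"
proof -
  have lin: "linear (\<lambda>z::'a. norm h *\<^sub>R z)"
    by (simp add: linearI scaleR_add_right)
  have "\<bar>fdiff_pow k (norm h *\<^sub>R w) (fdiff_pow r h f) y\<bar> \<le> 2 ^ r * K * norm h powr s"
    if "k \<le> r" for k w y
  proof -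
    have "\<bar>fdiff_pow k (norm h *\<^sub>R w) (fdiff_pow r h f) y\<bar> \<le> 2 ^ k * (K * norm h powr s)"
      by (rule fdiff_pow_abs_le) (rule hK)
    also have "\<dots> \<le> 2 ^ r * (K * norm h powr s)"
      using that K by (intro mult_right_mono power_increasing) simp_all
    finally show ?thesis
      by (simp add: mult.assoc)
  qed
  moreover have "\<bar>fdiff_pow r (norm h *\<^sub>R w) (fdiff_pow r h f) y\<bar>
      \<le> 2 ^ r * K * norm h powr s * norm w powr s" for w y
  proof -
    have "\<bar>fdiff_pow r h (fdiff_pow r (norm h *\<^sub>R w) f) y\<bar> \<le> 2 ^ r * (K * norm (norm h *\<^sub>R w) powr s)"
      by (rule fdiff_pow_abs_le) (rule hK)
    then show ?thesis
      by (simp add: fdiff_pow_commute powr_mult mult_ac)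
  qed
  ultimately show ?thesis
    by (simp add: fdiff_regular_def fdiff_pow_compose_affine[OF lin])
qed

lemma fdiff_pow_translation_small:
  fixes f :: "'a::real_normed_vector \<Rightarrow> real"
  assumes s: "0 < s" and r: "1 \<le> r" and K: "0 \<le> K"
    and hK: "\<And>v x. \<bar>fdiff_pow r v f x\<bar> \<le> K * norm v powr s" and \<eta>: "0 < \<eta>"
  obtains \<rho> where "0 < \<rho>"
    "\<And>h x x'. norm (x' - x) \<le> \<rho> * norm h \<Longrightarrow>
       \<bar>fdiff_pow r h f x' - fdiff_pow r h f x\<bar> \<le> \<eta> * norm h powr s"
proof -
  obtain \<rho> where \<rho>: "0 < \<rho>"
    "\<And>(g::'a \<Rightarrow> real) a c v x. fdiff_regular r s (2 ^ r * K) (2 ^ r * K) g a c \<Longrightarrow>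
       norm v \<le> \<rho> \<Longrightarrow> dist x a \<le> 1 \<Longrightarrow> \<bar>fdiff_pow 1 v g x\<bar> \<le> \<eta> * c"
    using fdiff_regular_small_difference[OF s _ order_refl r \<eta>, of "2 ^ r * K" "2 ^ r * K",
        unfolded of_nat_1] K
    by (meson zero_le_numeral zero_le_power mult_nonneg_nonneg)
  show thesis
  proof (rule that[of "min \<rho> 1"])
    fix h x x' :: 'a
    assume close: "norm (x' - x) \<le> min \<rho> 1 * norm h"
    show "\<bar>fdiff_pow r h f x' - fdiff_pow r h f x\<bar> \<le> \<eta> * norm h powr s"
    proof (cases "h = 0")
      case True
      then show ?thesis
        using close by simp
    next
      case False
      define v where "v = (1 / norm h) *\<^sub>R (x' - x)"
      have x': "x' = x + norm h *\<^sub>R v"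
        using False by (simp add: v_def)
      have "norm (x' - x) \<le> \<rho> * norm h" "norm (x' - x) \<le> 1 * norm h"
        using close mult_right_mono[of "min \<rho> 1" \<rho> "norm h"] mult_right_mono[of "min \<rho> 1" 1 "norm h"]
        by simp_all
      then have v: "norm v \<le> \<rho>" "norm v \<le> 1"
        using False by (simp_all add: v_def divide_le_eq mult.commute)
      have "fdiff_pow 1 v (\<lambda>z. fdiff_pow r h f (x + norm h *\<^sub>R z)) ((1/2) *\<^sub>R v)
          = fdiff_pow r h f x' - fdiff_pow r h f x"
        by (simp add: fdiff_def x' flip: scaleR_add_left)
      moreover have "dist ((1/2) *\<^sub>R v) 0 \<le> 1"
        using v(2) by simp
      ultimately show ?thesis
        using \<rho>(2)[OF fdiff_regular_translation[OF K hK] v(1)] by metis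
    qed
  qed (use \<rho> in simp)
qed

lemma fdiff_pow_dilation_eq:
  fixes f :: "'a::real_normed_vector \<Rightarrow> real"
  shows "fdiff_pow j \<tau> (\<lambda>\<mu>. fdiff_pow r (\<mu> *\<^sub>R h) f x) t =
     (\<Sum>p\<leftarrow>fdiff_coeffs r. fst p * fdiff_pow j ((\<tau> * snd p) *\<^sub>R h) f (x + (t * snd p) *\<^sub>R h))"
proof -
  have lin: "linear (\<lambda>\<mu>::real. (\<mu> * d) *\<^sub>R h)" for d
    using linear_scaleR_left[of "d *\<^sub>R h"] by simp
  have "(\<lambda>\<mu>. fdiff_pow r (\<mu> *\<^sub>R h) f x) = (\<lambda>\<mu>. \<Sum>p\<leftarrow>fdiff_coeffs r. fst p * f (x + (\<mu> * snd p) *\<^sub>R h))"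
    by (simp add: fdiff_pow_eq_sum mult.commute)
  then show ?thesis
    by (simp add: fdiff_pow_sum_list fdiff_pow_const_mult fdiff_pow_compose_affine[OF lin])
qed

lemma abs_fdiff_pow_dilation_le:
  fixes f :: "'a::real_normed_vector \<Rightarrow> real"
  assumes s: "0 < s" and K: "0 \<le> K" and hK: "\<And>v x. \<bar>fdiff_pow r v f x\<bar> \<le> K * norm v powr s"
    and bounds: "k \<le> r" "\<bar>w\<bar> \<le> 1" "\<bar>y - 1\<bar> \<le> real r"
  shows "\<bar>fdiff_pow k w (\<lambda>\<mu>. fdiff_pow r (\<mu> *\<^sub>R h) f x) y\<bar>
           \<le> 2 ^ r * K * (2 * real r + 1) powr s * norm h powr s"
proof -
  have "\<bar>fdiff_pow k w (\<lambda>\<mu>. fdiff_pow r (\<mu> *\<^sub>R h) f x) y\<bar> \<le> 2 ^ k * (K * ((2 * real r + 1) * norm h) powr s)"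
  proof (rule fdiff_pow_abs_le_local)
    fix t :: real
    assume "\<bar>t\<bar> \<le> real k / 2"
    then have "\<bar>t\<bar> * \<bar>w\<bar> \<le> real k / 2 * 1"
      using bounds(2) by (intro mult_mono) simp_all
    then have "\<bar>t * w\<bar> \<le> real r / 2"
      using bounds(1) by (simp add: abs_mult)
    then have "\<bar>y + t * w\<bar> \<le> 2 * real r + 1"
      using bounds(3) abs_triangle_ineq[of y "t * w"] abs_triangle_ineq[of "y - 1" 1] by simp
    then have "norm ((y + t *\<^sub>R w) *\<^sub>R h) \<le> (2 * real r + 1) * norm h"
      by (simp add: mult_right_mono)
    then have "norm ((y + t *\<^sub>R w) *\<^sub>R h) powr s \<le> ((2 * real r + 1) * norm h) powr s"
      using s by (intro powr_mono2) simp_all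
    then have "K * norm ((y + t *\<^sub>R w) *\<^sub>R h) powr s \<le> K * ((2 * real r + 1) * norm h) powr s"
      using K by (rule mult_left_mono)
    with hK[of "(y + t *\<^sub>R w) *\<^sub>R h" x]
    show "\<bar>fdiff_pow r ((y + t *\<^sub>R w) *\<^sub>R h) f x\<bar> \<le> K * ((2 * real r + 1) * norm h) powr s"
      by linarith
  qed
  also have "\<dots> \<le> 2 ^ r * (K * ((2 * real r + 1) * norm h) powr s)"
    using bounds(1) K by (intro mult_right_mono power_increasing) simp_all
  finally show ?thesis
    by (simp add: powr_mult mult_ac)
qed

lemma abs_fdiff_pow_dilation_top_le:
  fixes f :: "'a::real_normed_vector \<Rightarrow> real"
  assumes s: "0 < s" and K: "0 \<le> K" and hK: "\<And>v x. \<bar>fdiff_pow r v f x\<bar> \<le> K * norm v powr s"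
  shows "\<bar>fdiff_pow r w (\<lambda>\<mu>. fdiff_pow r (\<mu> *\<^sub>R h) f x) y\<bar>
           \<le> 2 ^ r * K * (real r / 2) powr s * norm h powr s * \<bar>w\<bar> powr s"
proof -
  let ?X = "K * (real r / 2) powr s * norm h powr s * \<bar>w\<bar> powr s"
  have bound: "\<bar>fdiff_pow r ((w * d) *\<^sub>R h) f z\<bar> \<le> ?X" if "\<bar>d\<bar> \<le> real r / 2" for d z
  proof -
    have "norm ((w * d) *\<^sub>R h) = \<bar>d\<bar> * (norm h * \<bar>w\<bar>)"
      by (simp add: abs_mult mult_ac)
    also have "\<dots> \<le> real r / 2 * (norm h * \<bar>w\<bar>)"
      using that by (intro mult_right_mono) simp_all
    finally have "norm ((w * d) *\<^sub>R h) powr s \<le> (real r / 2 * (norm h * \<bar>w\<bar>)) powr s"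
      using s by (intro powr_mono2) simp_all
    also have "\<dots> = (real r / 2) powr s * norm h powr s * \<bar>w\<bar> powr s"
      by (simp add: powr_mult mult.assoc del: times_divide_eq_left)
    finally have "K * norm ((w * d) *\<^sub>R h) powr s \<le> ?X"
      using K by (simp add: mult_left_mono mult.assoc)
    with hK[of "(w * d) *\<^sub>R h" z] show ?thesis
      by linarith
  qed
  have "\<bar>\<Sum>p\<leftarrow>fdiff_coeffs r. fst p * fdiff_pow r ((w * snd p) *\<^sub>R h) f (x + (y * snd p) *\<^sub>R h)\<bar>
      \<le> (\<Sum>p\<leftarrow>fdiff_coeffs r. \<bar>fst p\<bar>) * ?X"
    using bound abs_snd_fdiff_coeffs_le by (intro abs_sum_list_mult_le) blast
  then show ?thesis
    by (simp add: fdiff_pow_dilation_eq sum_list_abs_fst_fdiff_coeffs mult_ac)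
qed

lemma fdiff_regular_dilation:
  fixes f :: "'a::real_normed_vector \<Rightarrow> real"
  assumes s: "0 < s" and K: "0 \<le> K" and hK: "\<And>v x. \<bar>fdiff_pow r v f x\<bar> \<le> K * norm v powr s"
  shows "fdiff_regular r s (2 ^ r * K * (real r / 2) powr s) (2 ^ r * K * (2 * real r + 1) powr s)
           (\<lambda>\<mu>. fdiff_pow r (\<mu> *\<^sub>R h) f x) 1 (norm h powr s)"
  using abs_fdiff_pow_dilation_le[OF s K hK] abs_fdiff_pow_dilation_top_le[OF s K hK]
  unfolding fdiff_regular_def dist_real_def real_norm_def
  by (intro conjI allI impI) (simp_all del: fdiff_pow.simps)

lemma fdiff_pow_dilation_small:
  fixes f :: "'a::real_normed_vector \<Rightarrow> real"
  assumes s: "0 < s" and r: "1 \<le> r" and K: "0 \<le> K"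
    and hK: "\<And>v x. \<bar>fdiff_pow r v f x\<bar> \<le> K * norm v powr s" and \<eta>: "0 < \<eta>"
  obtains \<rho> where "0 < \<rho>"
    "\<And>h x t. \<bar>t - 1\<bar> \<le> \<rho> \<Longrightarrow>
       \<bar>fdiff_pow r (t *\<^sub>R h) f x - fdiff_pow r h f x\<bar> \<le> \<eta> * norm h powr s"
proof -
  let ?A = "2 ^ r * K * (real r / 2) powr s" and ?B = "2 ^ r * K * (2 * real r + 1) powr s"
  obtain \<rho> where \<rho>: "0 < \<rho>"
    "\<And>(g::real \<Rightarrow> real) a c v x. fdiff_regular r s ?A ?B g a c \<Longrightarrow>
       norm v \<le> \<rho> \<Longrightarrow> dist x a \<le> 1 \<Longrightarrow> \<bar>fdiff_pow 1 v g x\<bar> \<le> \<eta> * c"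
    using fdiff_regular_small_difference[OF s _ order_refl r \<eta>, of ?A ?B, unfolded of_nat_1] K
    by (meson zero_le_numeral zero_le_power mult_nonneg_nonneg powr_ge_zero)
  show thesis
  proof (rule that[of "min \<rho> 1"])
    fix h x :: 'a and t :: real
    assume close: "\<bar>t - 1\<bar> \<le> min \<rho> 1"
    have "\<bar>fdiff_pow 1 (t - 1) (\<lambda>\<mu>. fdiff_pow r (\<mu> *\<^sub>R h) f x) ((1 + t) / 2)\<bar>
        \<le> \<eta> * norm h powr s"
      by (rule \<rho>(2)[OF fdiff_regular_dilation[OF s K hK]]) (use close in \<open>auto simp: dist_real_def\<close>)
    then show "\<bar>fdiff_pow r (t *\<^sub>R h) f x - fdiff_pow r h f x\<bar> \<le> \<eta> * norm h powr s"
      by (simp add: fdiff_def field_simps)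
  qed (use \<rho> in simp)
qed

lemma fdiff_pow_small_perturbation:
  fixes f :: "'a::real_normed_vector \<Rightarrow> real"
  assumes s: "0 < s" and r: "1 \<le> r" and K: "0 \<le> K"
    and hK: "\<And>v x. \<bar>fdiff_pow r v f x\<bar> \<le> K * norm v powr s" and \<eta>: "0 < \<eta>"
  obtains \<rho> where "0 < \<rho>"
    "\<And>h x x0 t. \<bar>t - 1\<bar> \<le> \<rho> \<Longrightarrow> norm (x - x0) \<le> \<rho> * norm h \<Longrightarrow>
       \<bar>fdiff_pow r (t *\<^sub>R h) f x - fdiff_pow r h f x0\<bar> \<le> \<eta> * norm h powr s"
proof -
  have "0 < \<eta> / 2"
    using \<eta> by simp
  obtain \<rho>T where \<rho>T: "0 < \<rho>T" "\<And>h x x'. norm (x' - x) \<le> \<rho>T * norm h \<Longrightarrow>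
      \<bar>fdiff_pow r h f x' - fdiff_pow r h f x\<bar> \<le> \<eta> / 2 * norm h powr s"
    using fdiff_pow_translation_small[OF s r K hK \<open>0 < \<eta> / 2\<close>] by blast
  obtain \<rho>S where \<rho>S: "0 < \<rho>S" "\<And>h x t. \<bar>t - 1\<bar> \<le> \<rho>S \<Longrightarrow>
      \<bar>fdiff_pow r (t *\<^sub>R h) f x - fdiff_pow r h f x\<bar> \<le> \<eta> / 2 * norm h powr s"
    using fdiff_pow_dilation_small[OF s r K hK \<open>0 < \<eta> / 2\<close>] by blast
  show thesis
  proof (rule that[of "min \<rho>T \<rho>S"])
    fix h x x0 :: 'a and t :: real
    assume "\<bar>t - 1\<bar> \<le> min \<rho>T \<rho>S" "norm (x - x0) \<le> min \<rho>T \<rho>S * norm h"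
    then have "\<bar>t - 1\<bar> \<le> \<rho>S" "norm (x - x0) \<le> \<rho>T * norm h"
      using mult_right_mono[of "min \<rho>T \<rho>S" \<rho>T "norm h"] by simp_all
    then show "\<bar>fdiff_pow r (t *\<^sub>R h) f x - fdiff_pow r h f x0\<bar> \<le> \<eta> * norm h powr s"
      using \<rho>S(2)[where h = h and x = x and t = t] \<rho>T(2)[where h = h and x' = x and x = x0]
        dist_triangle[of "fdiff_pow r (t *\<^sub>R h) f x" "fdiff_pow r h f x0" "fdiff_pow r h f x"]
      unfolding dist_real_def by (simp add: field_simps)
  qed (use \<rho>T \<rho>S in simp)
qed

section \<open>Differences of functions in \<open>Lambda s\<close>\<close>

lemma bdd_above_fdiff_pow:
  assumes "bounded (range f)"
  shows "bdd_above {\<bar>fdiff_pow k h f x\<bar> | h. norm h = y}"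
proof -
  obtain M where "\<And>z. \<bar>f z\<bar> \<le> M"
    using assms by (auto simp: bounded_iff)
  then show ?thesis
    by (intro bdd_aboveI[where M = "2 ^ k * M"]) (auto intro: fdiff_pow_abs_le)
qed

lemma abs_fdiff_pow_le_Delta_sup:
  assumes "bounded (range f)" "norm h = y"
  shows "\<bar>fdiff_pow k h f x\<bar> \<le> Delta_sup k f x y"
  unfolding Delta_sup_def
  by (rule cSup_upper) (use assms(2) in blast, rule bdd_above_fdiff_pow[OF assms(1)])

lemma less_Delta_supE:
  fixes f :: "'a::euclidean_space \<Rightarrow> real"
  assumes "bounded (range f)" "0 \<le> y" "c < Delta_sup k f x y"
  obtains h where "norm h = y" "c < \<bar>fdiff_pow k h f x\<bar>"
proof -
  have "{\<bar>fdiff_pow k h f x\<bar> | h. norm h = y} \<noteq> {}"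
    using vector_choose_size[OF assms(2)] by blast
  from iffD1[OF less_cSup_iff[OF this bdd_above_fdiff_pow[OF assms(1)]]] assms(3)
  have "\<exists>z \<in> {\<bar>fdiff_pow k h f x\<bar> | h. norm h = y}. c < z"
    unfolding Delta_sup_def .
  then show thesis
    using that by blast
qed

lemma fdiff_pow_le_of_lower_order:
  assumes "m \<le> r" "\<And>v x. \<bar>fdiff_pow m v f x\<bar> \<le> K * norm v powr s"
  shows "\<bar>fdiff_pow r v f x\<bar> \<le> 2 ^ (r - m) * K * norm v powr s"
proof -
  have "fdiff_pow r v f = fdiff_pow (r - m) v (fdiff_pow m v f)"
    using fdiff_pow_add[of m "r - m" v f] assms(1) by simp
  then show ?thesis
    using fdiff_pow_abs_le[of "fdiff_pow m v f" "K * norm v powr s" "r - m" v x] assms(2)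
    by (simp add: mult.assoc)
qed

lemma Lambda_fdiff_pow_floor_le:
  fixes f :: "'a::real_normed_vector \<Rightarrow> real"
  assumes f: "f \<in> Lambda s" and s: "0 < s"
  obtains K where "0 \<le> K" "\<And>v x. \<bar>fdiff_pow (nat \<lfloor>s\<rfloor> + 1) v f x\<bar> \<le> K * norm v powr s"
proof -
  define m where "m = nat \<lfloor>s\<rfloor> + 1"
  have bdd: "bounded (range f)"
    and "\<exists>C. \<forall>x y. 0 < y \<and> y \<le> 1 \<longrightarrow> Delta_sup m f x y / y powr s \<le> C"
    using f by (auto simp: Lambda_def m_def)
  then obtain C where C: "\<And>x y. 0 < y \<Longrightarrow> y \<le> 1 \<Longrightarrow> Delta_sup m f x y / y powr s \<le> C"
    by auto
  obtain M where M: "\<And>z. \<bar>f z\<bar> \<le> M"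
    using bdd by (auto simp: bounded_iff)
  have "0 \<le> M"
    using M[of 0] by linarith
  define K where "K = max C (2 ^ m * M)"
  have bound: "\<bar>fdiff_pow m v f x\<bar> \<le> K * norm v powr s" for v x
  proof (cases "norm v \<le> 1")
    case small: True
    show ?thesis
    proof (cases "v = 0")
      case False
      have "\<bar>fdiff_pow m v f x\<bar> \<le> Delta_sup m f x (norm v)"
        using abs_fdiff_pow_le_Delta_sup[OF bdd] by blast
      also have "\<dots> \<le> C * norm v powr s"
        using C[of "norm v" x] small False by (simp add: divide_le_eq)
      also have "\<dots> \<le> K * norm v powr s"
        by (simp add: K_def mult_right_mono)
      finally show ?thesis .
    qed (use fdiff_pow_Suc_zero[of "nat \<lfloor>s\<rfloor>" f x] in \<open>simp add: m_def\<close>)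
  next
    case False
    have "\<bar>fdiff_pow m v f x\<bar> \<le> 2 ^ m * M"
      using M by (rule fdiff_pow_abs_le)
    also have "\<dots> \<le> 2 ^ m * M * norm v powr s"
      using mult_left_mono[OF ge_one_powr_ge_zero[of "norm v" s], of "2 ^ m * M"] False s \<open>0 \<le> M\<close>
      by simp
    also have "\<dots> \<le> K * norm v powr s"
      by (simp add: K_def mult_right_mono)
    finally show ?thesis
      by simp
  qed
  have "0 \<le> K"
    using \<open>0 \<le> M\<close> by (simp add: K_def le_max_iff_disj)
  then show thesis
    by (rule that[OF _ bound[unfolded m_def]])
qed

lemma Lambda_fdiff_pow_le:
  fixes f :: "'a::real_normed_vector \<Rightarrow> real"
  assumes f: "f \<in> Lambda s" and s: "0 < s" "s < real r"
  obtains K where "0 \<le> K" "\<And>v x. \<bar>fdiff_pow r v f x\<bar> \<le> K * norm v powr s"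
proof -
  obtain K0 where K0: "0 \<le> K0" "\<And>v x. \<bar>fdiff_pow (nat \<lfloor>s\<rfloor> + 1) v f x\<bar> \<le> K0 * norm v powr s"
    using Lambda_fdiff_pow_floor_le[OF f s(1)] by blast
  have m: "nat \<lfloor>s\<rfloor> + 1 \<le> r"
    using s by linarith
  show thesis
    by (rule that[OF _ fdiff_pow_le_of_lower_order[OF m K0(2)]]) (use K0(1) in simp)
qed

section \<open>Stability of the ratio \<open>\<Delta>_r f(x, y) / y^s\<close>\<close>

lemma Delta_sup_lower_bound_near:
  fixes f :: "'a::euclidean_space \<Rightarrow> real"
  assumes bdd: "bounded (range f)"
    and perturb: "\<And>h x x0 t. \<bar>t - 1\<bar> \<le> \<rho> \<Longrightarrow> norm (x - x0) \<le> \<rho> * norm h \<Longrightarrow>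
      \<bar>fdiff_pow r (t *\<^sub>R h) f x - fdiff_pow r h f x0\<bar> \<le> \<eta> * norm h powr s"
    and y0: "0 < y0" "c * y0 powr s < Delta_sup r f x0 y0"
    and t: "0 < t" "\<bar>t - 1\<bar> \<le> \<rho>" and x: "norm (x - x0) \<le> \<rho> * y0"
  shows "(c - \<eta>) * y0 powr s < Delta_sup r f x (t * y0)"
proof -
  obtain h where h: "norm h = y0" "c * y0 powr s < \<bar>fdiff_pow r h f x0\<bar>"
    using less_Delta_supE[OF bdd _ y0(2)] y0(1) by (metis less_imp_le)
  have "\<bar>fdiff_pow r (t *\<^sub>R h) f x - fdiff_pow r h f x0\<bar> \<le> \<eta> * y0 powr s"
    using perturb[OF t(2) x[folded h(1)]] h(1) by simp
  moreover have "\<bar>fdiff_pow r h f x0\<bar> \<le> \<bar>fdiff_pow r (t *\<^sub>R h) f x\<bar>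
      + \<bar>fdiff_pow r (t *\<^sub>R h) f x - fdiff_pow r h f x0\<bar>"
    using abs_triangle_ineq4[of "fdiff_pow r (t *\<^sub>R h) f x"
        "fdiff_pow r (t *\<^sub>R h) f x - fdiff_pow r h f x0"] by simp
  moreover have "(c - \<eta>) * y0 powr s = c * y0 powr s - \<eta> * y0 powr s"
    by (simp add: algebra_simps)
  ultimately have "(c - \<eta>) * y0 powr s < \<bar>fdiff_pow r (t *\<^sub>R h) f x\<bar>"
    using h(2) by linarith
  also have "\<dots> \<le> Delta_sup r f x (t * y0)"
    using abs_fdiff_pow_le_Delta_sup[OF bdd] h(1) t(1) by simp
  finally show ?thesis .
qed

lemma Delta_sup_ratio_stable:
  fixes f :: "'a::euclidean_space \<Rightarrow> real"
  assumes s: "0 < s" and r: "1 \<le> r" and bdd: "bounded (range f)"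
    and K: "0 \<le> K" and hK: "\<And>v x. \<bar>fdiff_pow r v f x\<bar> \<le> K * norm v powr s"
    and \<epsilon>1: "0 < \<epsilon>1" "\<epsilon>1 < \<epsilon>"
  obtains \<mu> where "0 < \<mu>" "\<mu> \<le> 1 / 2"
    "\<And>x y x0 y0. 0 < y0 \<Longrightarrow> \<epsilon> < Delta_sup r f x0 y0 / y0 powr s \<Longrightarrow>
       \<bar>y - y0\<bar> < \<mu> * y0 \<Longrightarrow> norm (x - x0) < \<mu> * y0 \<Longrightarrow> \<epsilon>1 < Delta_sup r f x y / y powr s"
proof -
  have "0 < (\<epsilon> - \<epsilon>1) / 2"
    using \<epsilon>1 by simp
  then obtain \<rho> where \<rho>: "0 < \<rho>" "\<And>h x x0 t. \<bar>t - 1\<bar> \<le> \<rho> \<Longrightarrow> norm (x - x0) \<le> \<rho> * norm h \<Longrightarrow>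
      \<bar>fdiff_pow r (t *\<^sub>R h) f x - fdiff_pow r h f x0\<bar> \<le> (\<epsilon> - \<epsilon>1) / 2 * norm h powr s"
    using fdiff_pow_small_perturbation[OF s r K hK] by blast
  define q where "q = (\<epsilon> + \<epsilon>1) / (2 * \<epsilon>1)"
  define \<tau> where "\<tau> = q powr (1 / s) - 1"
  have "1 < q"
    using \<epsilon>1 by (simp add: q_def)
  then have \<tau>: "0 < \<tau>" "(1 + \<tau>) powr s = q"
    using s by (simp_all add: \<tau>_def powr_powr)
  define \<mu> where "\<mu> = min \<rho> (min \<tau> (1 / 2))"
  show thesis
  proof (rule that[of \<mu>])
    show \<mu>: "0 < \<mu>" "\<mu> \<le> 1 / 2"
      using \<rho>(1) \<tau>(1) by (simp_all add: \<mu>_def)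
    fix x x0 :: 'a and y y0 :: real
    assume y0: "0 < y0" and big: "\<epsilon> < Delta_sup r f x0 y0 / y0 powr s"
      and close: "\<bar>y - y0\<bar> < \<mu> * y0" "norm (x - x0) < \<mu> * y0"
    define t where "t = y / y0"
    have "\<bar>t - 1\<bar> = \<bar>y - y0\<bar> / y0"
      using y0 by (simp add: t_def field_simps abs_divide)
    then have t1: "\<bar>t - 1\<bar> \<le> \<mu>"
      using close(1) y0 by (simp add: divide_le_eq)
    have "\<mu> * y0 \<le> 1 / 2 * y0"
      using y0 \<mu>(2) by (intro mult_right_mono) simp_all
    then have "0 < y"
      using close(1)[unfolded abs_less_iff] y0 by linarith
    then have t: "\<bar>t - 1\<bar> \<le> \<mu>" "y = t * y0" "0 < t"
      using t1 y0 by (simp_all add: t_def)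
    have "\<epsilon> * y0 powr s < Delta_sup r f x0 y0"
      using big y0 by (simp add: less_divide_eq)
    moreover have "\<bar>t - 1\<bar> \<le> \<rho>"
      using t(1) by (simp add: \<mu>_def)
    moreover have "\<mu> * y0 \<le> \<rho> * y0"
      using y0 by (intro mult_right_mono) (simp_all add: \<mu>_def)
    then have "norm (x - x0) \<le> \<rho> * y0"
      using close(2) by linarith
    ultimately have "(\<epsilon> - (\<epsilon> - \<epsilon>1) / 2) * y0 powr s < Delta_sup r f x (t * y0)"
      by (intro Delta_sup_lower_bound_near[OF bdd \<rho>(2) y0 _ t(3)])
    moreover have "\<epsilon> - (\<epsilon> - \<epsilon>1) / 2 = (\<epsilon> + \<epsilon>1) / 2"
      by (simp add: field_simps)
    ultimately have "(\<epsilon> + \<epsilon>1) / 2 * y0 powr s < Delta_sup r f x y"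
      using t(2) by metis
    moreover have "t powr s \<le> (1 + \<tau>) powr s"
      using t(1,3) s by (intro powr_mono2) (simp_all add: \<mu>_def abs_le_iff)
    then have "y powr s \<le> q * y0 powr s"
      using t(2,3) y0 \<tau>(2) by (simp add: powr_mult mult_right_mono)
    then have "\<epsilon>1 * y powr s \<le> (\<epsilon> + \<epsilon>1) / 2 * y0 powr s"
      using mult_left_mono[of "y powr s" "q * y0 powr s" \<epsilon>1] \<epsilon>1 by (simp add: q_def)
    ultimately show "\<epsilon>1 < Delta_sup r f x y / y powr s"
      using t(2,3) y0 by (simp add: less_divide_eq)
  qed
qed

lemma hyp_dist_less_arcosh_imp:
  fixes x x0 :: "'a::real_normed_vector"
  assumes y: "0 < y" "0 < y0" and \<mu>: "0 < \<mu>" "\<mu> \<le> 1"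
    and close: "hyp_dist (x, y) (x0, y0) < arcosh (1 + \<mu>\<^sup>2 / 4)"
  shows "\<bar>y - y0\<bar> < \<mu> * y0" "norm (x - x0) < \<mu> * y0"
proof -
  define N where "N = (norm (x - x0))\<^sup>2 + (y - y0)\<^sup>2"
  have "arcosh (1 + N / (2 * y * y0)) < arcosh (1 + \<mu>\<^sup>2 / 4)"
    using close by (simp add: hyp_dist_def N_def)
  then have "N / (2 * y * y0) < \<mu>\<^sup>2 / 4"
    using y by (simp add: N_def)
  then have N_less: "N < \<mu>\<^sup>2 / 2 * y * y0"
    using y by (simp add: field_simps)
  have "y < 2 * y0"
  proof (rule ccontr)
    assume "\<not> y < 2 * y0"
    then have "(y / 2)\<^sup>2 \<le> (y - y0)\<^sup>2"
      using y by (intro power_mono) simp_all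
    moreover have "\<mu>\<^sup>2 / 2 * y * y0 \<le> 1 / 2 * y * (y / 2)"
      using \<mu> y \<open>\<not> y < 2 * y0\<close> by (intro mult_mono) (simp_all add: power_le_one)
    moreover have "(y - y0)\<^sup>2 \<le> N" "(y / 2)\<^sup>2 = 1 / 2 * y * (y / 2)"
      by (simp_all add: N_def power2_eq_square)
    ultimately show False
      using N_less by linarith
  qed
  then have "\<mu>\<^sup>2 / 2 * y * y0 \<le> \<mu>\<^sup>2 * y0 * y0"
    using y \<mu> by (simp add: mult_left_mono)
  also have "\<dots> = (\<mu> * y0)\<^sup>2"
    by (simp add: power2_eq_square)
  finally have "\<mu>\<^sup>2 / 2 * y * y0 \<le> (\<mu> * y0)\<^sup>2" .
  moreover have "(y - y0)\<^sup>2 \<le> N" "(norm (x - x0))\<^sup>2 \<le> N"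
    by (simp_all add: N_def)
  ultimately have "(y - y0)\<^sup>2 < (\<mu> * y0)\<^sup>2" "(norm (x - x0))\<^sup>2 < (\<mu> * y0)\<^sup>2"
    using N_less by linarith+
  then have "\<bar>y - y0\<bar>\<^sup>2 < (\<mu> * y0)\<^sup>2" "(norm (x - x0))\<^sup>2 < (\<mu> * y0)\<^sup>2"
    by (simp_all only: power2_abs)
  then show "\<bar>y - y0\<bar> < \<mu> * y0" "norm (x - x0) < \<mu> * y0"
    using \<mu> y by (simp_all add: power2_less_imp_less)
qed

lemma dyadic_band_neighbour:
  fixes j :: int and y y0 :: real
  assumes "2 powr (- real_of_int j - 1) < y0" "y0 \<le> 2 powr (- real_of_int j)" "\<bar>y - y0\<bar> < y0 / 2"
  obtains i where "i \<in> {j - 1, j, j + 1}" "2 powr (- real_of_int i - 1) < y" "y \<le> 2 powr (- real_of_int i)"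
proof -
  define P where "P = 2 powr (- real_of_int j)"
  have shift: "2 powr e = P * 2 powr d" if "e = - real_of_int j + d" for e d
    unfolding that P_def by (rule powr_add)
  have "2 powr (- real_of_int j - 1) = P * 2 powr (- 1)"
      "2 powr (- real_of_int (j - 1) - 1) = P * 2 powr 0" "2 powr (- real_of_int (j - 1)) = P * 2 powr 1"
      "2 powr (- real_of_int (j + 1) - 1) = P * 2 powr (- 2)" "2 powr (- real_of_int (j + 1)) = P * 2 powr (- 1)"
    by (rule shift; simp)+
  moreover have "(2::real) powr - 1 = 1 / 2" "(2::real) powr - 2 = 1 / 4"
    by (simp_all add: powr_minus)
  ultimately have band: "2 powr (- real_of_int j - 1) = P / 2"
      "2 powr (- real_of_int (j - 1) - 1) = P" "2 powr (- real_of_int (j - 1)) = 2 * P"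
      "2 powr (- real_of_int (j + 1) - 1) = P / 4" "2 powr (- real_of_int (j + 1)) = P / 2"
    by simp_all
  have y0: "P / 2 < y0" "y0 \<le> P"
    using assms(1,2) by (simp_all only: band(1) P_def)
  have y: "y0 / 2 < y" "y < 3 / 2 * y0"
    using assms(3)[unfolded abs_less_iff] by auto
  consider "P < y" | "P / 2 < y" "y \<le> P" | "y \<le> P / 2"
    by linarith
  then show thesis
  proof cases
    case 1
    have "j - 1 \<in> {j - 1, j, j + 1}"
      by simp
    moreover have "2 powr (- real_of_int (j - 1) - 1) < y" "y \<le> 2 powr (- real_of_int (j - 1))"
      unfolding band using 1 y y0 by linarith+
    ultimately show thesis
      by (rule that)
  next
    case 2
    have "j \<in> {j - 1, j, j + 1}"
      by simp
    moreover have "2 powr (- real_of_int j - 1) < y" "y \<le> 2 powr (- real_of_int j)"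
      unfolding band(1) P_def[symmetric] using 2 by linarith+
    ultimately show thesis
      by (rule that)
  next
    case 3
    have "j + 1 \<in> {j - 1, j, j + 1}"
      by simp
    moreover have "2 powr (- real_of_int (j + 1) - 1) < y" "y \<le> 2 powr (- real_of_int (j + 1))"
      unfolding band using 3 y y0 by linarith+
    ultimately show thesis
      by (rule that)
  qed
qed

lemma hyp_nbhd_S_set_subset:
  fixes f :: "'a::real_normed_vector \<Rightarrow> real" and j :: int
  assumes \<mu>: "0 < \<mu>" "\<mu> \<le> 1 / 2"
    and stable: "\<And>x y x0 y0. 0 < y0 \<Longrightarrow> \<epsilon> < Delta_sup r f x0 y0 / y0 powr s \<Longrightarrow>
       \<bar>y - y0\<bar> < \<mu> * y0 \<Longrightarrow> norm (x - x0) < \<mu> * y0 \<Longrightarrow> \<epsilon>1 < Delta_sup r f x y / y powr s"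
  shows "hyp_nbhd (S_set r j s f \<epsilon>) (arcosh (1 + \<mu>\<^sup>2 / 4)) \<subseteq>
           S_set r (j - 1) s f \<epsilon>1 \<union> S_set r j s f \<epsilon>1 \<union> S_set r (j + 1) s f \<epsilon>1"
proof
  fix p
  assume "p \<in> hyp_nbhd (S_set r j s f \<epsilon>) (arcosh (1 + \<mu>\<^sup>2 / 4))"
  then obtain q where p: "0 < snd p" and q: "q \<in> S_set r j s f \<epsilon>"
    and close: "hyp_dist p q < arcosh (1 + \<mu>\<^sup>2 / 4)"
    unfolding hyp_nbhd_def by blast
  obtain x y x0 y0 where xy: "p = (x, y)" "q = (x0, y0)"
    by (cases p, cases q)
  from q have y0: "0 < y0" "\<epsilon> < Delta_sup r f x0 y0 / y0 powr s"
    "2 powr (- real_of_int j - 1) < y0" "y0 \<le> 2 powr (- real_of_int j)"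
    by (simp_all add: xy S_set_def)
  have "0 < y" "hyp_dist (x, y) (x0, y0) < arcosh (1 + \<mu>\<^sup>2 / 4)"
    using p close by (simp_all add: xy)
  from hyp_dist_less_arcosh_imp[OF this(1) y0(1) \<mu>(1) _ this(2)] \<mu>(2)
  have near: "\<bar>y - y0\<bar> < \<mu> * y0" "norm (x - x0) < \<mu> * y0"
    by simp_all
  have "\<bar>y - y0\<bar> < y0 / 2"
    using near(1) mult_right_mono[OF \<mu>(2) less_imp_le[OF y0(1)]] by linarith
  then obtain i where i: "i \<in> {j - 1, j, j + 1}"
    "2 powr (- real_of_int i - 1) < y" "y \<le> 2 powr (- real_of_int i)"
    by (rule dyadic_band_neighbour[OF y0(3,4)])
  have "(x, y) \<in> S_set r i s f \<epsilon>1"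
    using i(2,3) stable[OF y0(1,2) near] \<open>0 < y\<close> by (simp add: S_set_def)
  with i(1) show "p \<in> S_set r (j - 1) s f \<epsilon>1 \<union> S_set r j s f \<epsilon>1 \<union> S_set r (j + 1) s f \<epsilon>1"
    unfolding xy by blast
qed

theorem mainTheorem4:
  fixes s \<epsilon> \<epsilon>1 :: real and r :: nat and f :: "'a::euclidean_space \<Rightarrow> real"
  assumes "0 < s" and "real r > s" and "f \<in> Lambda s"
    and "0 < \<epsilon>1" and "\<epsilon>1 < \<epsilon>"
  shows "\<exists>\<delta>>0. \<forall>j::nat.
           hyp_nbhd (S_set r (int j) s f \<epsilon>) \<delta> \<subseteq>
             S_set r (int j - 1) s f \<epsilon>1 \<union> S_set r (int j) s f \<epsilon>1 \<union> S_set r (int j + 1) s f \<epsilon>1"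
proof -
  have r: "1 \<le> r"
    using assms(1,2) by simp
  have bdd: "bounded (range f)"
    using assms(3) by (simp add: Lambda_def)
  obtain K where K: "0 \<le> K" "\<And>v x. \<bar>fdiff_pow r v f x\<bar> \<le> K * norm v powr s"
    using Lambda_fdiff_pow_le[OF assms(3,1,2)] by blast
  obtain \<mu> where \<mu>: "0 < \<mu>" "\<mu> \<le> 1 / 2"
    and stable: "\<And>x y x0 y0. 0 < y0 \<Longrightarrow> \<epsilon> < Delta_sup r f x0 y0 / y0 powr s \<Longrightarrow>
       \<bar>y - y0\<bar> < \<mu> * y0 \<Longrightarrow> norm (x - x0) < \<mu> * y0 \<Longrightarrow> \<epsilon>1 < Delta_sup r f x y / y powr s"
    using Delta_sup_ratio_stable[OF assms(1) r bdd K assms(4,5)] by blast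
  show ?thesis
  proof (intro exI[of _ "arcosh (1 + \<mu>\<^sup>2 / 4)"] conjI allI)
    show "0 < arcosh (1 + \<mu>\<^sup>2 / 4)"
      using \<mu>(1) by simp
    show "hyp_nbhd (S_set r (int j) s f \<epsilon>) (arcosh (1 + \<mu>\<^sup>2 / 4)) \<subseteq>
        S_set r (int j - 1) s f \<epsilon>1 \<union> S_set r (int j) s f \<epsilon>1 \<union> S_set r (int j + 1) s f \<epsilon>1" for j
      by (rule hyp_nbhd_S_set_subset[OF \<mu> stable])
  qed
qed

end
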